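(* Let $G$ be a finite simple connected graph with exactly $h$ holes. Suppose that all the holes in $G$ are pairwise edge-disjoint and that $G$ has exactly one non-edge maximal clique $K$. If, for some edge $e$ of a hole $H$ of $G$, the graph $G-e$ has at least $h$ holes, then $e$ is an edge of $K$. Moreover, in that case, writing $e=v_iv_j$, every hole of $G-e$ which is not a hole of $G$ has the form $(H-v_iv_j)\cup\{v_iv_k,v_jv_k\}$ for some vertex $v_k$ of $K$.
   Context: A hole of a graph is an induced (chordless) cycle of length at least $4$. A clique is a complete subgraph; a clique is non-edge if it has at least $3$ vertices. $G-e$ denotes the graph obtained from $G$ by deleting the edge $e$. *)

theory Defs
  imports Main
begin

definition simple_graph :: "'a set \<Rightarrow> 'a set set \<Rightarrow> bool" where
  "simple_graph V Ed \<longleftrightarrow> finite V \<and>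
     (\<forall>e\<in>Ed. \<exists>u v. e = {u, v} \<and> u \<noteq> v \<and> u \<in> V \<and> v \<in> V)"

definition adj :: "'a set set \<Rightarrow> 'a \<Rightarrow> 'a \<Rightarrow> bool" where
  "adj Ed u v \<longleftrightarrow> u \<noteq> v \<and> {u, v} \<in> Ed"

definition graph_connected :: "'a set \<Rightarrow> 'a set set \<Rightarrow> bool" where
  "graph_connected V Ed \<longleftrightarrow> V \<noteq> {} \<and>
     (\<forall>u\<in>V. \<forall>v\<in>V. (\<lambda>x y. x \<in> V \<and> y \<in> V \<and> adj Ed x y)\<^sup>*\<^sup>* u v)"

definition induced_edges :: "'a set set \<Rightarrow> 'a set \<Rightarrow> 'a set set" where
  "induced_edges Ed S = {e \<in> Ed. e \<subseteq> S}"

definition is_cycle :: "'a set \<Rightarrow> 'a set set \<Rightarrow> bool" where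
  "is_cycle S F \<longleftrightarrow> finite S \<and> card S \<ge> 3 \<and> graph_connected S F \<and>
     (\<forall>e\<in>F. e \<subseteq> S) \<and> (\<forall>v\<in>S. card {e \<in> F. v \<in> e} = 2)"

definition is_hole :: "'a set \<Rightarrow> 'a set set \<Rightarrow> 'a set \<Rightarrow> bool" where
  "is_hole V Ed S \<longleftrightarrow> S \<subseteq> V \<and> card S \<ge> 4 \<and> is_cycle S (induced_edges Ed S)"

definition holes :: "'a set \<Rightarrow> 'a set set \<Rightarrow> 'a set set" where
  "holes V Ed = {S. is_hole V Ed S}"

definition is_clique :: "'a set \<Rightarrow> 'a set set \<Rightarrow> 'a set \<Rightarrow> bool" where
  "is_clique V Ed K \<longleftrightarrow> K \<subseteq> V \<and> (\<forall>u\<in>K. \<forall>v\<in>K. u \<noteq> v \<longrightarrow> {u, v} \<in> Ed)"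

definition maximal_clique :: "'a set \<Rightarrow> 'a set set \<Rightarrow> 'a set \<Rightarrow> bool" where
  "maximal_clique V Ed K \<longleftrightarrow> is_clique V Ed K \<and>
     (\<forall>K'. is_clique V Ed K' \<and> K \<subseteq> K' \<longrightarrow> K' = K)"

end

theory Submission
  imports Defs
begin

text \<open>
  Let \<open>e = vivj\<close> be an edge of a hole \<open>H\<close> of \<open>G\<close>.  Deleting \<open>e\<close> destroys \<open>H\<close>, so if
  \<open>G - e\<close> still has at least \<open>h\<close> holes, it has a hole \<open>S\<close> that is not a hole of \<open>G\<close>.
  Such an \<open>S\<close> contains \<open>vi\<close> and \<open>vj\<close>, which are non-adjacent on the cycle \<open>S\<close>.

  The core is a statement about an arbitrary cycle with two non-adjacent vertices \<open>vi\<close>, \<open>vj\<close>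
  (locale \<open>cycle_nonadjacent_pair\<close>): removing \<open>vi\<close>, \<open>vj\<close> leaves two segments, each attached
  to \<open>vi\<close> and to \<open>vj\<close> by exactly one edge, so each segment closes up with the edge \<open>vivj\<close>
  to a cycle.  Since cycles are defined as connected 2-regular graphs, the attachment
  count is obtained by double counting edge ends, using that a connected graph on \<open>n\<close>
  vertices has at least \<open>n - 1\<close> edges.

  In \<open>G\<close> (locale \<open>new_hole_setting\<close>) a closed segment is induced; with at least two inner
  vertices it is a hole through \<open>e\<close>, hence \<open>H\<close> by edge-disjointness, and with one inner vertex
  \<open>k\<close> it is a triangle, hence inside the unique large clique \<open>K\<close>.  The two segments cannot be
  of the same kind, so \<open>S = H + k\<close> with edges \<open>(H - vivj) \<union> {vivk, vjvk}\<close> and \<open>vi, vj, k \<in> K\<close>.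
\<close>

definition doubleton_edges :: "'a set set \<Rightarrow> bool" where
  "doubleton_edges F \<longleftrightarrow> (\<forall>f\<in>F. \<exists>u v. f = {u, v} \<and> u \<noteq> v)"

text \<open>Ordered pairs of related elements of \<open>X\<close>; for \<open>A = adj F\<close> it counts each edge inside \<open>X\<close> twice.\<close>
definition adj_pairs :: "('a \<Rightarrow> 'a \<Rightarrow> bool) \<Rightarrow> 'a set \<Rightarrow> ('a \<times> 'a) set" where
  "adj_pairs A X = {(x, y). x \<in> X \<and> y \<in> X \<and> A x y}"

lemma simple_graph_doubleton_edges: "simple_graph V Ed \<Longrightarrow> doubleton_edges Ed"
  unfolding simple_graph_def doubleton_edges_def by blast

lemma doubleton_edges_subset: "doubleton_edges Ed \<Longrightarrow> F \<subseteq> Ed \<Longrightarrow> doubleton_edges F"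
  unfolding doubleton_edges_def by blast

lemma doubleton_edge_eq:
  assumes "doubleton_edges F" "f \<in> F" "x \<in> f" "y \<in> f" "x \<noteq> y"
  shows "f = {x, y}"
proof -
  obtain u v where "f = {u, v}" using assms(1,2) unfolding doubleton_edges_def by blast
  then show ?thesis using assms(3-5) by auto
qed

lemma adj_sym: "adj F x y \<Longrightarrow> adj F y x"
  by (auto simp: adj_def insert_commute)

lemma adj_irrefl: "\<not> adj F x x"
  by (simp add: adj_def)

lemma card_incident_edges:
  assumes "doubleton_edges E"
  shows "card {f\<in>E. x \<in> f} = card {y. adj E x y}"
proof -
  have "{f\<in>E. x \<in> f} = (\<lambda>y. {x, y}) ` {y. adj E x y}"
  proof (intro set_eqI iffI)
    fix f assume f: "f \<in> {f\<in>E. x \<in> f}"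
    then obtain u v where "f = {u, v}" "u \<noteq> v"
      using assms unfolding doubleton_edges_def by blast
    then obtain y where "f = {x, y}" "x \<noteq> y" using f by blast
    then show "f \<in> (\<lambda>y. {x, y}) ` {y. adj E x y}" using f by (auto simp: adj_def)
  qed (auto simp: adj_def)
  moreover have "inj_on (\<lambda>y. {x, y}) {y. adj E x y}"
    by (auto simp: inj_on_def adj_def doubleton_eq_iff)
  ultimately show ?thesis by (simp add: card_image)
qed

lemma connected_closed_subset_eq:
  assumes "graph_connected S F" "X \<subseteq> S" "x0 \<in> X"
    and closed: "\<And>x y. x \<in> X \<Longrightarrow> y \<in> S \<Longrightarrow> adj F x y \<Longrightarrow> y \<in> X"
  shows "X = S"
proof
  show "S \<subseteq> X"
  proof
    fix y assume "y \<in> S"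
    then have "(\<lambda>x y. x \<in> S \<and> y \<in> S \<and> adj F x y)\<^sup>*\<^sup>* x0 y"
      using assms(1-3) unfolding graph_connected_def by blast
    then show "y \<in> X"
    proof (induction rule: rtranclp_induct)
      case (step y z)
      then show ?case using closed by blast
    qed (rule assms(3))
  qed
qed (use assms(2) in auto)

lemma rtranclp_exit:
  "r\<^sup>*\<^sup>* a y \<Longrightarrow> a \<in> X \<Longrightarrow> y \<notin> X \<Longrightarrow> \<exists>x z. r\<^sup>*\<^sup>* a x \<and> x \<in> X \<and> z \<notin> X \<and> r x z"
proof (induction rule: rtranclp_induct)
  case (step y z)
  then show ?case by (cases "y \<in> X") auto
qed simp

lemma finite_adj_pairs: "finite X \<Longrightarrow> finite (adj_pairs A X)"
  by (rule finite_subset[of _ "X \<times> X"]) (auto simp: adj_pairs_def)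

lemma adj_pairs_insert:
  assumes "finite X" "u \<in> X" "w \<notin> X" "A u w" "A w u"
  shows "card (adj_pairs A X) + 2 \<le> card (adj_pairs A (insert w X))"
proof -
  have "adj_pairs A X \<inter> {(u, w), (w, u)} = {}" "u \<noteq> w"
    using assms(2,3) by (auto simp: adj_pairs_def)
  then have "card (adj_pairs A X \<union> {(u, w), (w, u)}) = card (adj_pairs A X) + 2"
    using assms(1) by (simp add: card_Un_disjoint finite_adj_pairs)
  moreover have "adj_pairs A X \<union> {(u, w), (w, u)} \<subseteq> adj_pairs A (insert w X)"
    using assms by (auto simp: adj_pairs_def)
  ultimately show ?thesis
    using assms(1) by (metis card_mono finite_adj_pairs finite_insert)
qed

text \<open>A connected graph on \<open>n\<close> vertices has at least \<open>n - 1\<close> edges, i.e. \<open>2n - 2\<close> ordered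
  adjacent pairs; connectivity is expressed by the cut condition \<open>cross\<close>.  The proof grows
  a vertex set one neighbour at a time.\<close>
lemma connected_adj_pairs_lower_bound:
  assumes fin: "finite T" and ne: "T \<noteq> {}"
    and cross: "\<And>X. X \<subseteq> T \<Longrightarrow> X \<noteq> {} \<Longrightarrow> X \<noteq> T \<Longrightarrow> \<exists>u\<in>X. \<exists>w\<in>T - X. A u w \<and> A w u"
  shows "2 * card T \<le> card (adj_pairs A T) + 2"
proof -
  have grow: "\<exists>X\<subseteq>T. card X = Suc k \<and> 2 * Suc k \<le> card (adj_pairs A X) + 2"
    if "Suc k \<le> card T" for k
    using that
  proof (induction k)
    case 0
    obtain t where "t \<in> T" using ne by blast
    then show ?case by (intro exI[of _ "{t}"]) auto
  next
    case (Suc k)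
    then obtain X where X: "X \<subseteq> T" "card X = Suc k" "2 * Suc k \<le> card (adj_pairs A X) + 2"
      by auto
    have "X \<noteq> {}" "X \<noteq> T" using X(2) Suc.prems by auto
    then obtain u w where uw: "u \<in> X" "w \<in> T - X" "A u w" "A w u"
      using cross X(1) by blast
    have finX: "finite X" using X(1) fin finite_subset by blast
    have "card (adj_pairs A X) + 2 \<le> card (adj_pairs A (insert w X))"
      using adj_pairs_insert[OF finX uw(1) _ uw(3,4)] uw(2) by blast
    moreover have "card (insert w X) = Suc (Suc k)" using finX uw(2) X(2) by simp
    moreover have "insert w X \<subseteq> T" using X(1) uw(2) by blast
    ultimately show ?case using X(3) by (intro exI[of _ "insert w X"]) simp
  qed
  have "Suc (card T - 1) = card T" using fin ne by (simp add: card_gt_0_iff)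
  then obtain X where X: "X \<subseteq> T" "card X = card T" "2 * card T \<le> card (adj_pairs A X) + 2"
    using grow[of "card T - 1"] by auto
  then show ?thesis using card_subset_eq[OF fin X(1,2)] by simp
qed

text \<open>Ordered adjacent pairs come in pairs \<open>(x, y)\<close>, \<open>(y, x)\<close>, one per edge.\<close>
lemma even_card_adj_pairs:
  assumes two: "doubleton_edges F" and fin: "finite R"
  shows "even (card (adj_pairs (adj F) R))"
proof -
  define I where "I = {f\<in>F. f \<subseteq> R}"
  define P where "P = (\<lambda>f::'a set. {(x, y). x \<in> f \<and> y \<in> f \<and> x \<noteq> y})"
  have edge_I: "f = {x, y}" if "f \<in> I" "x \<in> f" "y \<in> f" "x \<noteq> y" for f x y
    using doubleton_edge_eq[OF two _ that(2-4)] that(1) by (simp add: I_def)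
  have pairs_eq: "adj_pairs (adj F) R = (\<Union>f\<in>I. P f)"
  proof (intro set_eqI iffI)
    fix p assume "p \<in> adj_pairs (adj F) R"
    then obtain x y where "p = (x, y)" "x \<in> R" "y \<in> R" "{x, y} \<in> F" "x \<noteq> y"
      by (auto simp: adj_pairs_def adj_def)
    then show "p \<in> (\<Union>f\<in>I. P f)" unfolding I_def P_def by (intro UN_I[of "{x, y}"]) auto
  next
    fix p assume "p \<in> (\<Union>f\<in>I. P f)"
    then obtain f x y where f: "f \<in> I" "x \<in> f" "y \<in> f" "x \<noteq> y" "p = (x, y)"
      unfolding P_def by blast
    then have "{x, y} \<in> F" "{x, y} \<subseteq> R" using edge_I[OF f(1-4)] by (auto simp: I_def)
    then show "p \<in> adj_pairs (adj F) R" using f(4,5) by (simp add: adj_pairs_def adj_def)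
  qed
  have card_P: "card (P f) = 2" if "f \<in> I" for f
  proof -
    have "f \<in> F" using that by (simp add: I_def)
    then obtain x y where xy: "f = {x, y}" "x \<noteq> y"
      using two unfolding doubleton_edges_def by blast
    then have "P f = {(x, y), (y, x)}" unfolding P_def by auto
    then show ?thesis using xy(2) by simp
  qed
  have "finite I" unfolding I_def
    by (rule finite_subset[of _ "Pow R"]) (use fin in auto)
  moreover have "\<forall>f\<in>I. finite (P f)"
    using card_P by (metis card.infinite zero_neq_numeral)
  moreover have "\<forall>f\<in>I. \<forall>g\<in>I. f \<noteq> g \<longrightarrow> P f \<inter> P g = {}"
  proof (intro ballI impI)
    fix f g assume fg: "f \<in> I" "g \<in> I" "f \<noteq> g"
    show "P f \<inter> P g = {}"
    proof (rule ccontr)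
      assume "P f \<inter> P g \<noteq> {}"
      then obtain x y where "x \<in> f" "y \<in> f" "x \<in> g" "y \<in> g" "x \<noteq> y" unfolding P_def by blast
      then have "f = {x, y}" "g = {x, y}" using edge_I fg(1,2) by blast+
      then show False using fg(3) by simp
    qed
  qed
  ultimately have "card (\<Union>f\<in>I. P f) = (\<Sum>f\<in>I. card (P f))"
    by (rule card_UN_disjoint)
  also have "\<dots> = 2 * card I" using card_P by simp
  finally show ?thesis by (simp add: pairs_eq)
qed

locale cycle_nonadjacent_pair =
  fixes S :: "'a set" and F :: "'a set set" and vi vj :: 'a
  assumes cycle: "is_cycle S F" and doubleton: "doubleton_edges F"
    and vi: "vi \<in> S" and vj: "vj \<in> S" and distinct: "vi \<noteq> vj"
    and nonadjacent: "\<not> adj F vi vj"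
begin

lemma finite_S: "finite S"
  using cycle by (simp add: is_cycle_def)

lemma adj_in: "adj F x y \<Longrightarrow> x \<in> S \<and> y \<in> S"
  using cycle unfolding is_cycle_def adj_def by blast

lemma degree: "v \<in> S \<Longrightarrow> card {y. adj F v y} = 2"
  using cycle card_incident_edges[OF doubleton, of v] unfolding is_cycle_def by simp

lemma finite_neighbours: "finite {y. adj F v y}"
  by (rule finite_subset[OF _ finite_S]) (use adj_in in blast)

lemma neighbours_eq:
  assumes "adj F k x" "adj F k y" "x \<noteq> y"
  shows "{z. adj F k z} = {x, y}"
proof -
  have "card {x, y} = card {z. adj F k z}" using degree adj_in assms by simp
  then show ?thesis
    using card_subset_eq[OF finite_neighbours, of "{x, y}"] assms(1,2) by simp
qed

lemma neighbour_inner: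
  assumes "adj F vi a"
  shows "a \<in> S - {vi, vj}"
proof -
  have "a \<noteq> vi" using assms adj_irrefl by metis
  moreover have "a \<noteq> vj" using assms nonadjacent by metis
  ultimately show ?thesis using adj_in[OF assms] by simp
qed

definition inner_adj :: "'a \<Rightarrow> 'a \<Rightarrow> bool" where
  "inner_adj x y \<longleftrightarrow> x \<in> S - {vi, vj} \<and> y \<in> S - {vi, vj} \<and> adj F x y"

definition segment :: "'a \<Rightarrow> 'a set" where
  "segment a = {y. inner_adj\<^sup>*\<^sup>* a y}"

lemma segment_self: "a \<in> segment a"
  by (simp add: segment_def)

lemma segment_subset:
  assumes "a \<in> S - {vi, vj}"
  shows "segment a \<subseteq> S - {vi, vj}"
proof
  fix y assume "y \<in> segment a"
  then have "inner_adj\<^sup>*\<^sup>* a y" by (simp add: segment_def)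
  then show "y \<in> S - {vi, vj}"
    by (induction rule: rtranclp_induct) (use assms in \<open>simp_all add: inner_adj_def\<close>)
qed

lemma finite_segment: "a \<in> S - {vi, vj} \<Longrightarrow> finite (segment a)"
  using segment_subset finite_S finite_subset by blast

lemma segment_closed:
  assumes a: "a \<in> S - {vi, vj}" and x: "x \<in> segment a" and xy: "adj F x y"
  shows "y \<in> segment a \<or> y = vi \<or> y = vj"
proof (cases "y = vi \<or> y = vj")
  case False
  then have "inner_adj x y"
    using segment_subset[OF a] x adj_in[OF xy] xy by (auto simp: inner_adj_def)
  then have "inner_adj\<^sup>*\<^sup>* a y" using x by (simp add: segment_def)
  then show ?thesis by (simp add: segment_def)
qed simp

text \<open>Segments are equivalence classes: two segments are equal or disjoint.\<close>
lemma segment_disjoint: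
  assumes "b \<notin> segment a"
  shows "segment a \<inter> segment b = {}"
proof (rule ccontr)
  have "symp inner_adj\<^sup>*\<^sup>*"
    by (rule symp_rtranclp) (auto intro: sympI simp: inner_adj_def adj_sym)
  moreover assume "segment a \<inter> segment b \<noteq> {}"
  then obtain y where "inner_adj\<^sup>*\<^sup>* a y" "inner_adj\<^sup>*\<^sup>* b y" by (auto simp: segment_def)
  ultimately have "inner_adj\<^sup>*\<^sup>* a b" by (meson rtranclp_trans sympD)
  then show False using assms by (simp add: segment_def)
qed

lemma segment_exit:
  assumes X: "X \<subseteq> segment a" "X \<noteq> {}" "X \<noteq> segment a"
  shows "\<exists>u\<in>X. \<exists>w\<in>segment a - X. adj F u w \<and> adj F w u"
proof (cases "a \<in> X")
  case True
  obtain y where "inner_adj\<^sup>*\<^sup>* a y" "y \<notin> X" using X by (auto simp: segment_def)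
  then obtain x z where xz: "inner_adj\<^sup>*\<^sup>* a x" "x \<in> X" "z \<notin> X" "inner_adj x z"
    using rtranclp_exit[of inner_adj a y X] True by blast
  then have "z \<in> segment a"
    using rtranclp.rtrancl_into_rtrancl[OF xz(1,4)] by (simp add: segment_def)
  moreover have "adj F x z" "adj F z x" using xz(4) adj_sym by (auto simp: inner_adj_def)
  ultimately show ?thesis using xz(2,3) by blast
next
  case False
  obtain y where y: "y \<in> X" using X by blast
  then have "inner_adj\<^sup>*\<^sup>* a y" "a \<in> segment a - X" "y \<notin> segment a - X"
    using X(1) False by (auto simp: segment_def)
  then obtain x z where xz: "inner_adj\<^sup>*\<^sup>* a x" "x \<in> segment a - X" "z \<notin> segment a - X"
      "inner_adj x z"
    using rtranclp_exit[of inner_adj a y "segment a - X"] by blast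
  then have "z \<in> X"
    using rtranclp.rtrancl_into_rtrancl[OF xz(1,4)] by (simp add: segment_def)
  moreover have "adj F x z" "adj F z x" using xz(4) adj_sym by (auto simp: inner_adj_def)
  ultimately show ?thesis using xz(2) by blast
qed

text \<open>Counting edge ends: every segment vertex has degree 2, and its neighbours lie in the
  segment or are \<open>vi\<close> or \<open>vj\<close>.\<close>
lemma segment_degree_sum:
  assumes a: "a \<in> S - {vi, vj}"
  defines "R \<equiv> segment a"
  shows "2 * card R = card (adj_pairs (adj F) R) + card {x\<in>R. adj F vi x} + card {x\<in>R. adj F vj x}"
proof -
  define Ni where "Ni = {x\<in>R. adj F vi x}"
  define Nj where "Nj = {x\<in>R. adj F vj x}"
  define D where "D = Sigma R (\<lambda>x. {y. adj F x y})"
  have finR: "finite R" and RS: "R \<subseteq> S - {vi, vj}"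
    using finite_segment[OF a] segment_subset[OF a] by (simp_all add: R_def)
  have "card D = (\<Sum>x\<in>R. card {y. adj F x y})"
    unfolding D_def using finR finite_neighbours by simp
  also have "\<dots> = (\<Sum>x\<in>R. 2)" using degree RS by (intro sum.cong) auto
  also have "\<dots> = 2 * card R" by simp
  finally have card_D: "card D = 2 * card R" .
  have "D = adj_pairs (adj F) R \<union> ((Ni \<times> {vi}) \<union> (Nj \<times> {vj}))"
  proof
    show "D \<subseteq> adj_pairs (adj F) R \<union> ((Ni \<times> {vi}) \<union> (Nj \<times> {vj}))"
    proof
      fix p assume "p \<in> D"
      then obtain x y where p: "p = (x, y)" "x \<in> R" "adj F x y" unfolding D_def by blast
      then have "y \<in> R \<or> y = vi \<or> y = vj" using segment_closed[OF a] by (simp add: R_def)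
      then show "p \<in> adj_pairs (adj F) R \<union> ((Ni \<times> {vi}) \<union> (Nj \<times> {vj}))"
        using p adj_sym[OF p(3)] unfolding adj_pairs_def Ni_def Nj_def by auto
    qed
    show "adj_pairs (adj F) R \<union> ((Ni \<times> {vi}) \<union> (Nj \<times> {vj})) \<subseteq> D"
      unfolding D_def adj_pairs_def Ni_def Nj_def using adj_sym by auto
  qed
  moreover have "adj_pairs (adj F) R \<inter> ((Ni \<times> {vi}) \<union> (Nj \<times> {vj})) = {}"
    using RS by (auto simp: adj_pairs_def)
  moreover have "(Ni \<times> {vi}) \<inter> (Nj \<times> {vj}) = {}" using distinct by auto
  moreover have "finite Ni" "finite Nj" using finR by (simp_all add: Ni_def Nj_def)
  ultimately have "card D = card (adj_pairs (adj F) R) + card Ni + card Nj"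
    using finR by (simp add: card_Un_disjoint finite_adj_pairs card_cartesian_product)
  then show ?thesis using card_D by (simp add: Ni_def Nj_def)
qed

lemma segment_reaches_vj:
  assumes a: "a \<in> S - {vi, vj}" and nbrs: "{y. adj F vi y} \<subseteq> segment a"
  shows "\<exists>x\<in>segment a. adj F vj x"
proof (rule ccontr)
  assume none: "\<not> (\<exists>x\<in>segment a. adj F vj x)"
  have closed: "y \<in> insert vi (segment a)"
    if x: "x \<in> insert vi (segment a)" and xy: "adj F x y" for x y
  proof (cases "x = vi")
    case True
    then show ?thesis using nbrs xy by blast
  next
    case False
    then have xa: "x \<in> segment a" using x by simp
    have "y \<noteq> vj"
    proof
      assume "y = vj"
      then have "adj F vj x" using xy adj_sym by simp
      then show False using none xa by blast
    qed
    then show ?thesis using segment_closed[OF a xa xy] by blast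
  qed
  have "graph_connected S F" using cycle by (simp add: is_cycle_def)
  moreover have "insert vi (segment a) \<subseteq> S" using segment_subset[OF a] vi by blast
  ultimately have "insert vi (segment a) = S"
    using connected_closed_subset_eq[of S F "insert vi (segment a)" vi] closed by blast
  then have "vj \<in> insert vi (segment a)" using vj by simp
  then have "vj \<in> segment a" using distinct by simp
  then show False using segment_subset[OF a] by blast
qed

text \<open>Each segment is attached to \<open>vi\<close> and to \<open>vj\<close> by exactly one edge: the count
  \<open>|Ni| + |Nj| = 2|R| - 2e(R)\<close> is even and at most 2, since the segment is connected.\<close>
lemma segment_attachments:
  assumes va: "adj F vi a"
  shows "card {x\<in>segment a. adj F vi x} = 1" "card {x\<in>segment a. adj F vj x} = 1"
proof -
  have a: "a \<in> S - {vi, vj}" using neighbour_inner[OF va] .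
  define R where "R = segment a"
  define Ni where "Ni = {x\<in>R. adj F vi x}"
  define Nj where "Nj = {x\<in>R. adj F vj x}"
  have finR: "finite R" using finite_segment[OF a] by (simp add: R_def)
  have sum: "2 * card R = card (adj_pairs (adj F) R) + card Ni + card Nj"
    using segment_degree_sum[OF a] by (simp add: R_def Ni_def Nj_def)
  have even: "even (card (adj_pairs (adj F) R))"
    using even_card_adj_pairs[OF doubleton finR] .
  have tree: "2 * card R \<le> card (adj_pairs (adj F) R) + 2"
  proof (rule connected_adj_pairs_lower_bound[OF finR])
    show "R \<noteq> {}" using segment_self by (auto simp: R_def)
    show "\<And>X. X \<subseteq> R \<Longrightarrow> X \<noteq> {} \<Longrightarrow> X \<noteq> R \<Longrightarrow> \<exists>u\<in>X. \<exists>w\<in>R - X. adj F u w \<and> adj F w u"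
      unfolding R_def by (rule segment_exit)
  qed
  have "a \<in> Ni" using va segment_self by (simp add: Ni_def R_def)
  then have Ni_pos: "1 \<le> card Ni" using finR by (auto simp: Ni_def card_gt_0_iff Suc_le_eq)
  have Ni_sub: "Ni \<subseteq> {y. adj F vi y}" by (auto simp: Ni_def)
  have Ni_le: "card Ni \<le> 2"
    using card_mono[OF finite_neighbours Ni_sub] degree[OF vi] by simp
  have "\<not> (card Ni = 2 \<and> card Nj = 0)"
  proof
    assume c: "card Ni = 2 \<and> card Nj = 0"
    then have "Ni = {y. adj F vi y}"
      using card_subset_eq[OF finite_neighbours Ni_sub] degree[OF vi] by simp
    then have "{y. adj F vi y} \<subseteq> segment a" by (auto simp: Ni_def R_def)
    moreover have "Nj = {}" using c finR by (simp add: Nj_def)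
    ultimately show False using segment_reaches_vj[OF a] by (auto simp: Nj_def R_def)
  qed
  moreover obtain m where "card (adj_pairs (adj F) R) = 2 * m" using even by (rule evenE)
  ultimately have "card Ni = 1 \<and> card Nj = 1" using sum tree Ni_pos Ni_le by presburger
  then show "card {x\<in>segment a. adj F vi x} = 1" "card {x\<in>segment a. adj F vj x} = 1"
    by (simp_all add: Ni_def Nj_def R_def)
qed

definition closed_segment_edges :: "'a \<Rightarrow> 'a set set" where
  "closed_segment_edges a = {f \<in> insert {vi, vj} F. f \<subseteq> segment a \<union> {vi, vj}}"

lemma adj_closed_segment_edges:
  "adj (closed_segment_edges a) x y \<longleftrightarrow>
     x \<noteq> y \<and> x \<in> segment a \<union> {vi, vj} \<and> y \<in> segment a \<union> {vi, vj} \<and>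
     (adj F x y \<or> {x, y} = {vi, vj})"
  by (auto simp: adj_def closed_segment_edges_def)

text \<open>In the segment closed up by the edge \<open>vivj\<close>, every vertex has degree 2:
  inner vertices keep their two neighbours, and \<open>vi\<close>, \<open>vj\<close> each gain the other as
  neighbour besides their unique attachment to the segment.\<close>
lemma closed_segment_degree:
  assumes va: "adj F vi a" and v: "v \<in> segment a \<union> {vi, vj}"
  shows "card {y. adj (closed_segment_edges a) v y} = 2"
proof -
  have a: "a \<in> S - {vi, vj}" using neighbour_inner[OF va] .
  define R where "R = segment a"
  have RS: "R \<subseteq> S - {vi, vj}" using segment_subset[OF a] by (simp add: R_def)
  have finR: "finite R" using finite_segment[OF a] by (simp add: R_def)
  show ?thesis
  proof (cases "v \<in> R")
    case True
    have "adj (closed_segment_edges a) v y \<longleftrightarrow> adj F v y" for y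
    proof
      assume "adj F v y"
      then have "y \<in> R \<or> y = vi \<or> y = vj" using segment_closed[OF a] True by (simp add: R_def)
      then show "adj (closed_segment_edges a) v y"
        using \<open>adj F v y\<close> True adj_irrefl[of F v] adj_closed_segment_edges R_def by auto
    next
      assume "adj (closed_segment_edges a) v y"
      moreover have "{v, y} \<noteq> {vi, vj}" using True RS by (auto simp: doubleton_eq_iff)
      ultimately show "adj F v y" by (simp add: adj_closed_segment_edges)
    qed
    then show ?thesis using degree True RS by auto
  next
    case False
    then obtain w where vw: "{v, w} = {vi, vj}" "v \<noteq> w"
      using v distinct by (auto simp: R_def)
    have "\<not> adj F v w" using vw nonadjacent adj_sym[of F vj vi] by (auto simp: doubleton_eq_iff)
    then have "{y. adj (closed_segment_edges a) v y} = insert w {x\<in>R. adj F v x}"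
      using vw adj_irrefl[of F v] segment_closed[OF a] unfolding R_def adj_closed_segment_edges
      by (auto simp: doubleton_eq_iff)
    moreover have "w \<notin> R" using vw RS by (auto simp: doubleton_eq_iff)
    moreover have "card {x\<in>R. adj F v x} = 1"
      using segment_attachments[OF va] vw by (auto simp: R_def doubleton_eq_iff)
    ultimately show ?thesis using finR by simp
  qed
qed

lemma segment_attachment_exists:
  assumes "adj F vi a"
  obtains x where "x \<in> segment a" "adj F vj x"
proof -
  have "{x\<in>segment a. adj F vj x} \<noteq> {}"
    using segment_attachments(2)[OF assms] by (metis card.empty zero_neq_one)
  then show ?thesis using that by blast
qed

text \<open>A closed segment is connected: its inner part is connected by definition, and
  \<open>vi\<close>, \<open>vj\<close> are attached to it.\<close>
lemma closed_segment_connected: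
  assumes va: "adj F vi a"
  shows "graph_connected (segment a \<union> {vi, vj}) (closed_segment_edges a)"
proof -
  define T where "T = segment a \<union> {vi, vj}"
  define rel where "rel = (\<lambda>x y. x \<in> T \<and> y \<in> T \<and> adj (closed_segment_edges a) x y)"
  have rel_adj: "rel x y" if "x \<in> T" "y \<in> T" "adj F x y" for x y
    using that adj_irrefl[of F x] by (auto simp: rel_def adj_closed_segment_edges T_def)
  have "symp rel"
    by (auto simp: symp_def rel_def adj_def insert_commute)
  then have "symp rel\<^sup>*\<^sup>*" by (rule symp_rtranclp)
  then have rel_sym: "rel\<^sup>*\<^sup>* x y \<Longrightarrow> rel\<^sup>*\<^sup>* y x" for x y by (rule sympD)
  have reach_segment: "rel\<^sup>*\<^sup>* a y" if "y \<in> segment a" for y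
  proof -
    have "inner_adj\<^sup>*\<^sup>* a y" using that by (simp add: segment_def)
    then show ?thesis
    proof (induction rule: rtranclp_induct)
      case (step z y)
      have "z \<in> segment a" "y \<in> segment a"
        using step(1) rtranclp.rtrancl_into_rtrancl[OF step(1,2)] by (simp_all add: segment_def)
      moreover have "adj F z y" using step(2) by (simp add: inner_adj_def)
      ultimately have "rel z y" using rel_adj by (simp add: T_def)
      then show ?case using step(3) by simp
    qed simp
  qed
  have reach: "rel\<^sup>*\<^sup>* a y" if y: "y \<in> T" for y
  proof -
    consider "y \<in> segment a" | "y = vi" | "y = vj" using y unfolding T_def by blast
    then show ?thesis
    proof cases
      case 2
      have "rel a vi" using rel_adj[OF _ _ adj_sym[OF va]] segment_self by (simp add: T_def)
      then show ?thesis using 2 by simp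
    next
      case 3
      obtain x where x: "x \<in> segment a" "adj F vj x" using segment_attachment_exists[OF va] .
      have "rel x vj" using rel_adj[OF _ _ adj_sym[OF x(2)]] x(1) by (simp add: T_def)
      then show ?thesis using reach_segment[OF x(1)] 3 by simp
    qed (rule reach_segment)
  qed
  show ?thesis unfolding graph_connected_def
  proof (intro conjI ballI)
    fix u w assume "u \<in> segment a \<union> {vi, vj}" "w \<in> segment a \<union> {vi, vj}"
    then have "rel\<^sup>*\<^sup>* u a" "rel\<^sup>*\<^sup>* a w" using reach rel_sym by (simp_all add: T_def)
    then have "rel\<^sup>*\<^sup>* u w" by (rule rtranclp_trans)
    then show "(\<lambda>x y. x \<in> segment a \<union> {vi, vj} \<and> y \<in> segment a \<union> {vi, vj} \<and>
        adj (closed_segment_edges a) x y)\<^sup>*\<^sup>* u w"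
      unfolding rel_def T_def .
  qed simp
qed

lemma closed_segment_cycle:
  assumes va: "adj F vi a"
  shows "is_cycle (segment a \<union> {vi, vj}) (closed_segment_edges a)"
    and "card (segment a \<union> {vi, vj}) = card (segment a) + 2"
proof -
  have a: "a \<in> S - {vi, vj}" using neighbour_inner[OF va] .
  have finR: "finite (segment a)" using finite_segment[OF a] .
  show card_T: "card (segment a \<union> {vi, vj}) = card (segment a) + 2"
    using finR segment_subset[OF a] distinct by (subst card_Un_disjoint) auto
  have "doubleton_edges (closed_segment_edges a)"
    using doubleton distinct unfolding doubleton_edges_def closed_segment_edges_def by blast
  moreover have "card (segment a) \<ge> 1"
    using finR segment_self by (metis One_nat_def Suc_leI card_gt_0_iff empty_iff)
  ultimately show "is_cycle (segment a \<union> {vi, vj}) (closed_segment_edges a)"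
    unfolding is_cycle_def
  proof (intro conjI ballI)
    show "finite (segment a \<union> {vi, vj})" using finR by simp
    show "3 \<le> card (segment a \<union> {vi, vj})" using card_T \<open>card (segment a) \<ge> 1\<close> by simp
    show "graph_connected (segment a \<union> {vi, vj}) (closed_segment_edges a)"
      using closed_segment_connected[OF va] .
    show "f \<subseteq> segment a \<union> {vi, vj}" if "f \<in> closed_segment_edges a" for f
      using that by (simp add: closed_segment_edges_def)
    show "card {f \<in> closed_segment_edges a. v \<in> f} = 2" if "v \<in> segment a \<union> {vi, vj}" for v
      using card_incident_edges[OF \<open>doubleton_edges _\<close>] closed_segment_degree[OF va that]
      by simp
  qed
qed

lemma cycle_split:
  obtains a b where "adj F vi a" "adj F vi b"
    "segment a \<inter> segment b = {}" "S = segment a \<union> segment b \<union> {vi, vj}"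
proof -
  obtain a b where ab: "{y. adj F vi y} = {a, b}" "a \<noteq> b"
    using degree[OF vi] card_2_iff by metis
  have va: "adj F vi a" and vb: "adj F vi b" using ab(1) by (simp_all add: set_eq_iff)
  have a: "a \<in> S - {vi, vj}" using neighbour_inner[OF va] .
  have b: "b \<in> S - {vi, vj}" using neighbour_inner[OF vb] .
  have "b \<notin> segment a"
  proof
    assume "b \<in> segment a"
    then have "{a, b} \<subseteq> {x\<in>segment a. adj F vi x}" using va vb segment_self by auto
    moreover have "finite {x\<in>segment a. adj F vi x}" using finite_segment[OF a] by simp
    ultimately have "card {a, b} \<le> 1"
      using card_mono segment_attachments(1)[OF va] by metis
    then show False using ab(2) by simp
  qed
  then have disjoint: "segment a \<inter> segment b = {}" by (rule segment_disjoint)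
  obtain x1 where x1: "x1 \<in> segment a" "adj F vj x1" using segment_attachment_exists[OF va] .
  obtain x2 where x2: "x2 \<in> segment b" "adj F vj x2" using segment_attachment_exists[OF vb] .
  have "x1 \<noteq> x2" using x1 x2 disjoint by blast
  then have vj_nbrs: "{y. adj F vj y} = {x1, x2}" using neighbours_eq x1 x2 by blast
  have closed: "y \<in> segment a \<union> segment b \<union> {vi, vj}"
    if x: "x \<in> segment a \<union> segment b \<union> {vi, vj}" and xy: "adj F x y" for x y
  proof -
    consider "x \<in> segment a" | "x \<in> segment b" | "x = vi" | "x = vj" using x by blast
    then show ?thesis
    proof cases
      case 1 then show ?thesis using segment_closed[OF a _ xy] by blast
    next
      case 2 then show ?thesis using segment_closed[OF b _ xy] by blast
    next
      case 3
      then have "y \<in> {a, b}" unfolding ab(1)[symmetric] using xy by simp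
      then show ?thesis using segment_self by blast
    next
      case 4
      then have "y \<in> {x1, x2}" unfolding vj_nbrs[symmetric] using xy by simp
      then show ?thesis using x1 x2 by blast
    qed
  qed
  have "graph_connected S F" using cycle by (simp add: is_cycle_def)
  moreover have "segment a \<union> segment b \<union> {vi, vj} \<subseteq> S"
    using segment_subset[OF a] segment_subset[OF b] vi vj by blast
  ultimately have "segment a \<union> segment b \<union> {vi, vj} = S"
  proof (rule connected_closed_subset_eq[of S F _ vi])
    show "vi \<in> segment a \<union> segment b \<union> {vi, vj}" by simp
  qed (erule closed, assumption)
  then show ?thesis using that va vb disjoint by blast
qed

end

lemma maximal_clique_extends:
  assumes "finite V" and C: "is_clique V Ed C"
  obtains M where "maximal_clique V Ed M" "C \<subseteq> M"
proof -
  have "finite {X. is_clique V Ed X}"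
    by (rule finite_subset[of _ "Pow V"]) (use assms(1) in \<open>auto simp: is_clique_def\<close>)
  then obtain M where "is_clique V Ed M" "C \<subseteq> M" "\<forall>X. is_clique V Ed X \<and> M \<subseteq> X \<longrightarrow> M = X"
    using finite_has_maximal2[of "{X. is_clique V Ed X}" C] C by auto
  then show ?thesis using that[of M] unfolding maximal_clique_def by blast
qed

lemma clique_in_unique_large_clique:
  assumes "simple_graph V Ed"
    and unique: "\<forall>K'. maximal_clique V Ed K' \<and> card K' \<ge> 3 \<longrightarrow> K' = K"
    and C: "is_clique V Ed C" "card C \<ge> 3"
  shows "C \<subseteq> K"
proof -
  have fin: "finite V" using assms(1) by (simp add: simple_graph_def)
  obtain M where M: "maximal_clique V Ed M" "C \<subseteq> M"
    using maximal_clique_extends[OF fin C(1)] .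
  have "finite M" using M(1) fin finite_subset unfolding maximal_clique_def is_clique_def by blast
  then have "card M \<ge> 3" using card_mono[OF _ M(2)] C(2) by simp
  then show ?thesis using unique M by blast
qed

lemma finite_holes: "finite V \<Longrightarrow> finite (holes V Ed)"
  by (rule finite_subset[of _ "Pow V"]) (auto simp: holes_def is_hole_def)

text \<open>Deleting an edge of a hole leaves its endpoints with degree 1 in the hole's vertex set.\<close>
lemma hole_destroyed:
  assumes H: "H \<in> holes V Ed" and eH: "e \<in> induced_edges Ed H" and v: "v \<in> e"
  shows "H \<notin> holes V (Ed - {e})"
proof
  define I where "I = {f \<in> induced_edges Ed H. v \<in> f}"
  have vH: "v \<in> H" using eH v by (auto simp: induced_edges_def)
  have "is_cycle H (induced_edges Ed H)" using H by (simp add: holes_def is_hole_def)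
  then have card_I: "card I = 2" using vH by (simp add: is_cycle_def I_def)
  assume "H \<in> holes V (Ed - {e})"
  then have "is_cycle H (induced_edges (Ed - {e}) H)" by (simp add: holes_def is_hole_def)
  then have "card {f \<in> induced_edges (Ed - {e}) H. v \<in> f} = 2" using vH by (simp add: is_cycle_def)
  moreover have "{f \<in> induced_edges (Ed - {e}) H. v \<in> f} = I - {e}"
    by (auto simp: induced_edges_def I_def)
  ultimately have "card (I - {e}) = 2" by simp
  moreover have "e \<in> I" using eH v by (simp add: I_def)
  ultimately show False using card_I by simp
qed

lemma new_hole_exists:
  assumes "finite V" "H \<in> holes V Ed" "H \<notin> holes V Ed'"
    and "card (holes V Ed') \<ge> card (holes V Ed)"
  obtains S where "S \<in> holes V Ed'" "S \<notin> holes V Ed"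
proof (rule ccontr)
  assume "\<not> thesis"
  then have "holes V Ed' \<subseteq> holes V Ed - {H}" using that assms(3) by blast
  then have "card (holes V Ed') \<le> card (holes V Ed - {H})"
    using finite_holes[OF assms(1)] by (simp add: card_mono)
  also have "\<dots> = card (holes V Ed) - 1" using assms(2) by (rule card_Diff_singleton)
  finally have "card (holes V Ed') \<le> card (holes V Ed) - 1" .
  moreover have "card (holes V Ed) > 0"
    using assms(2) finite_holes[OF assms(1)] card_gt_0_iff by blast
  ultimately show False using assms(4) by linarith
qed

text \<open>A new hole of \<open>G - e\<close> must use both endpoints of \<open>e\<close>; otherwise it is a hole of \<open>G\<close> too.\<close>
lemma new_hole_contains_edge:
  assumes "S \<in> holes V (Ed - {e})" "S \<notin> holes V Ed"
  shows "e \<subseteq> S"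
proof (rule ccontr)
  assume "\<not> e \<subseteq> S"
  then have "induced_edges (Ed - {e}) S = induced_edges Ed S" by (auto simp: induced_edges_def)
  then show False using assms by (simp add: holes_def is_hole_def)
qed

locale new_hole_setting = cycle_nonadjacent_pair +
  fixes V :: "'a set" and Ed :: "'a set set" and K H :: "'a set"
  assumes simple: "simple_graph V Ed"
    and S_sub: "S \<subseteq> V"
    and F_eq: "F = induced_edges (Ed - {{vi, vj}}) S"
    and H_hole: "H \<in> holes V Ed"
    and edge_in_H: "{vi, vj} \<in> induced_edges Ed H"
    and holes_disjoint: "\<forall>H1\<in>holes V Ed. \<forall>H2\<in>holes V Ed. H1 \<noteq> H2 \<longrightarrow>
           induced_edges Ed H1 \<inter> induced_edges Ed H2 = {}"
    and K_max: "maximal_clique V Ed K"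
    and K_unique: "\<forall>K'. maximal_clique V Ed K' \<and> card K' \<ge> 3 \<longrightarrow> K' = K"
begin

lemma F_iff: "f \<in> F \<longleftrightarrow> f \<in> Ed \<and> f \<noteq> {vi, vj} \<and> f \<subseteq> S"
  using F_eq by (simp add: induced_edges_def)

lemma edge_in_Ed: "{vi, vj} \<in> Ed"
  using edge_in_H by (simp add: induced_edges_def)

lemma closed_segment_induced:
  assumes "adj F vi a"
  shows "induced_edges Ed (segment a \<union> {vi, vj}) = closed_segment_edges a"
proof (intro set_eqI iffI)
  have sub: "segment a \<union> {vi, vj} \<subseteq> S"
    using segment_subset[OF neighbour_inner[OF assms]] vi vj by blast
  fix f
  assume "f \<in> induced_edges Ed (segment a \<union> {vi, vj})"
  then have "f \<in> Ed" "f \<subseteq> segment a \<union> {vi, vj}" by (simp_all add: induced_edges_def)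
  then show "f \<in> closed_segment_edges a"
    using sub by (auto simp: closed_segment_edges_def F_iff)
next
  fix f
  assume "f \<in> closed_segment_edges a"
  then show "f \<in> induced_edges Ed (segment a \<union> {vi, vj})"
    using edge_in_Ed by (auto simp: closed_segment_edges_def F_iff induced_edges_def)
qed

text \<open>A segment with at least two vertices closes up to a hole of \<open>G\<close> through the edge
  \<open>vivj\<close>; by edge-disjointness of holes it is \<open>H\<close>.\<close>
lemma long_segment_closes_H:
  assumes va: "adj F vi a" and long: "card (segment a) \<ge> 2"
  shows "segment a \<union> {vi, vj} = H"
proof (rule ccontr)
  assume ne: "segment a \<union> {vi, vj} \<noteq> H"
  have "segment a \<union> {vi, vj} \<subseteq> V"
    using segment_subset[OF neighbour_inner[OF va]] S_sub vi vj by blast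
  moreover have "card (segment a \<union> {vi, vj}) \<ge> 4"
    using closed_segment_cycle(2)[OF va] long by simp
  moreover have "is_cycle (segment a \<union> {vi, vj}) (induced_edges Ed (segment a \<union> {vi, vj}))"
    using closed_segment_cycle(1)[OF va] closed_segment_induced[OF va] by simp
  ultimately have "segment a \<union> {vi, vj} \<in> holes V Ed" by (simp add: holes_def is_hole_def)
  then have "induced_edges Ed (segment a \<union> {vi, vj}) \<inter> induced_edges Ed H = {}"
    using holes_disjoint[rule_format, OF _ H_hole ne] by simp
  moreover have "{vi, vj} \<in> induced_edges Ed (segment a \<union> {vi, vj})"
    using edge_in_Ed by (simp add: induced_edges_def)
  ultimately show False using edge_in_H by (metis IntI empty_iff)
qed

text \<open>A one-vertex segment \<open>{k}\<close> forms a triangle \<open>vi vj k\<close> of \<open>G\<close>, which must lie in \<open>K\<close>.\<close>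
lemma short_segment_triangle:
  assumes va: "adj F vi a" and short: "card (segment a) \<le> 1"
  obtains k where "segment a = {k}" "adj F vi k" "adj F vj k" "{vi, vj, k} \<subseteq> K"
proof -
  have a: "a \<in> S - {vi, vj}" using neighbour_inner[OF va] .
  have "segment a \<noteq> {}" using segment_self[of a] by blast
  then have "card (segment a) \<noteq> 0" using finite_segment[OF a] by simp
  then have "card (segment a) = 1" using short by simp
  then obtain k where k: "segment a = {k}" using card_1_singleton_iff[of "segment a"] by auto
  have "{x\<in>segment a. adj F vi x} \<noteq> {}" "{x\<in>segment a. adj F vj x} \<noteq> {}"
    using segment_attachments[OF va] by (metis card.empty zero_neq_one)+
  then have adj_k: "adj F vi k" "adj F vj k" using k by auto
  have "k \<notin> {vi, vj}" using segment_subset[OF a] k by blast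
  then have "card {vi, vj, k} = 3" using distinct by auto
  moreover have "is_clique V Ed {vi, vj, k}"
  proof -
    have "{vi, k} \<in> Ed" "{vj, k} \<in> Ed" using adj_k by (auto simp: adj_def F_iff)
    moreover have "{vi, vj, k} \<subseteq> V" using adj_in[OF adj_k(1)] S_sub vi vj by blast
    ultimately show ?thesis using edge_in_Ed by (auto simp: is_clique_def insert_commute)
  qed
  ultimately have "{vi, vj, k} \<subseteq> K"
    using clique_in_unique_large_clique[OF simple K_unique] by (metis order_refl)
  then show ?thesis using that k adj_k by blast
qed

text \<open>Two one-vertex segments \<open>{k}\<close>, \<open>{l}\<close> are impossible: \<open>k\<close> and \<open>l\<close> lie in the clique \<open>K\<close>,
  so \<open>k\<close> would have the three neighbours \<open>vi\<close>, \<open>vj\<close>, \<open>l\<close> on the cycle.\<close>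
lemma no_two_triangles:
  assumes k: "adj F vi k" "adj F vj k" "k \<in> K" and l: "l \<in> K" "l \<in> S - {vi, vj}" "k \<noteq> l"
  shows False
proof -
  have "{k, l} \<in> Ed" using K_max k(3) l(1,3) by (simp add: maximal_clique_def is_clique_def)
  moreover have "k \<in> S - {vi, vj}" using neighbour_inner[OF k(1)] .
  ultimately have "adj F k l" using l(2,3) by (auto simp: adj_def F_iff doubleton_eq_iff)
  moreover have "{y. adj F k y} = {vi, vj}"
    using neighbours_eq adj_sym[OF k(1)] adj_sym[OF k(2)] distinct by blast
  ultimately show False using l(2) by auto
qed

lemma ear_edges:
  assumes S_eq: "S = insert k H" and k: "adj F vi k" "adj F vj k"
  shows "F = (induced_edges Ed H - {{vi, vj}}) \<union> {{vi, k}, {vj, k}}"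
proof
  have k_nbrs: "{y. adj F k y} = {vi, vj}"
    using neighbours_eq adj_sym[OF k(1)] adj_sym[OF k(2)] distinct by blast
  show "F \<subseteq> (induced_edges Ed H - {{vi, vj}}) \<union> {{vi, k}, {vj, k}}"
  proof
    fix f assume f: "f \<in> F"
    show "f \<in> (induced_edges Ed H - {{vi, vj}}) \<union> {{vi, k}, {vj, k}}"
    proof (cases "k \<in> f")
      case True
      obtain u w where "f = {u, w}" "u \<noteq> w" using f doubleton unfolding doubleton_edges_def by blast
      then obtain y where y: "f = {k, y}" "k \<noteq> y" using True by auto
      then have "y \<in> {vi, vj}" using f k_nbrs by (auto simp: adj_def)
      then show ?thesis using y by (auto simp: insert_commute)
    next
      case False
      then show ?thesis using f S_eq by (auto simp: F_iff induced_edges_def)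
    qed
  qed
  show "(induced_edges Ed H - {{vi, vj}}) \<union> {{vi, k}, {vj, k}} \<subseteq> F"
    using k S_eq by (auto simp: F_iff induced_edges_def adj_def insert_commute)
qed

text \<open>Of the two segments of \<open>S\<close>, one closes up to \<open>H\<close> and the other is a single vertex of
  \<open>K\<close>: both closing up to \<open>H\<close> contradicts their disjointness, both being single vertices
  contradicts lemma no_two_triangles.\<close>
theorem new_hole_shape:
  "vi \<in> K \<and> vj \<in> K \<and> (\<exists>vk\<in>K. F = (induced_edges Ed H - {{vi, vj}}) \<union> {{vi, vk}, {vj, vk}})"
proof -
  obtain a b where ab: "adj F vi a" "adj F vi b"
    and disjoint: "segment a \<inter> segment b = {}" and S_eq: "S = segment a \<union> segment b \<union> {vi, vj}"
    by (rule cycle_split)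
  have ear: ?thesis
    if "segment c = {k}" "adj F vi k" "adj F vj k" "{vi, vj, k} \<subseteq> K"
      "segment d \<union> {vi, vj} = H" "S = segment c \<union> segment d \<union> {vi, vj}" for c d k
  proof -
    have "S = insert k H" using that(1,5,6) by auto
    then have "F = (induced_edges Ed H - {{vi, vj}}) \<union> {{vi, k}, {vj, k}}"
      using ear_edges that(2,3) by blast
    then show ?thesis using that(4) by blast
  qed
  show ?thesis
  proof (cases "card (segment a) \<le> 1")
    case True
    then obtain k where k: "segment a = {k}" "adj F vi k" "adj F vj k" "{vi, vj, k} \<subseteq> K"
      using short_segment_triangle[OF ab(1)] by blast
    show ?thesis
    proof (cases "card (segment b) \<le> 1")
      case True
      then obtain l where l: "segment b = {l}" "{vi, vj, l} \<subseteq> K"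
        using short_segment_triangle[OF ab(2)] by blast
      have "l \<in> S - {vi, vj}" "k \<noteq> l"
        using l(1) k(1) segment_subset[OF neighbour_inner[OF ab(2)]] disjoint by auto
      then show ?thesis using no_two_triangles k(2-4) l(2) by auto
    next
      case False
      then show ?thesis using ear[OF k] long_segment_closes_H[OF ab(2)] S_eq by simp
    qed
  next
    case long_a: False
    show ?thesis
    proof (cases "card (segment b) \<le> 1")
      case True
      then obtain k where k: "segment b = {k}" "adj F vi k" "adj F vj k" "{vi, vj, k} \<subseteq> K"
        using short_segment_triangle[OF ab(2)] by blast
      then show ?thesis
        using ear[OF k] long_segment_closes_H[OF ab(1)] long_a S_eq by (simp add: Un_commute)
    next
      case False
      then have "segment a \<union> {vi, vj} = segment b \<union> {vi, vj}"
        using long_segment_closes_H ab long_a by simp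
      moreover have "segment a \<subseteq> S - {vi, vj}" "segment b \<subseteq> S - {vi, vj}"
        using segment_subset neighbour_inner ab by blast+
      ultimately have "segment a = segment b" by blast
      then show ?thesis using disjoint segment_self by blast
    qed
  qed
qed

end

lemma new_hole_replaces_edge:
  assumes simple: "simple_graph V Ed"
    and disjoint: "\<forall>H1\<in>holes V Ed. \<forall>H2\<in>holes V Ed. H1 \<noteq> H2 \<longrightarrow>
           induced_edges Ed H1 \<inter> induced_edges Ed H2 = {}"
    and K_max: "maximal_clique V Ed K"
    and K_unique: "\<forall>K'. maximal_clique V Ed K' \<and> card K' \<ge> 3 \<longrightarrow> K' = K"
    and H: "H \<in> holes V Ed" and eH: "e \<in> induced_edges Ed H" and e: "e = {vi, vj}"
    and S: "S \<in> holes V (Ed - {e})" "S \<notin> holes V Ed"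
  shows "vi \<in> K \<and> vj \<in> K \<and>
    (\<exists>vk\<in>K. induced_edges (Ed - {e}) S = (induced_edges Ed H - {e}) \<union> {{vi, vk}, {vj, vk}})"
proof -
  have doubleton: "doubleton_edges Ed" using simple by (rule simple_graph_doubleton_edges)
  have "e \<in> Ed" using eH by (simp add: induced_edges_def)
  then obtain u v where uv: "e = {u, v}" "u \<noteq> v"
    using doubleton unfolding doubleton_edges_def by blast
  have distinct: "vi \<noteq> vj"
  proof
    assume "vi = vj"
    then have "{u, v} = {vi}" using e uv(1) by simp
    then have "u = vi" "v = vi" by (metis insertI1 singletonD, metis insertI1 insert_commute singletonD)
    then show False using uv(2) by simp
  qed
  have S': "S \<in> holes V (Ed - {{vi, vj}})" "S \<notin> holes V Ed" using S e by simp_all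
  have eH': "{vi, vj} \<in> induced_edges Ed H" using eH e by simp
  let ?F = "induced_edges (Ed - {{vi, vj}}) S"
  have cycle: "is_cycle S ?F" and S_sub: "S \<subseteq> V"
    using S'(1) by (simp_all add: holes_def is_hole_def)
  have F_doubleton: "doubleton_edges ?F"
    using doubleton by (rule doubleton_edges_subset) (auto simp: induced_edges_def)
  have ends: "vi \<in> S" "vj \<in> S" using new_hole_contains_edge[OF S'] by simp_all
  have nonadjacent: "\<not> adj ?F vi vj" by (simp add: adj_def induced_edges_def)
  have "new_hole_setting S ?F vi vj V Ed K H"
    unfolding new_hole_setting_def new_hole_setting_axioms_def cycle_nonadjacent_pair_def
    by (intro conjI)
      (rule cycle F_doubleton ends distinct nonadjacent simple S_sub refl H eH' disjoint K_max K_unique)+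
  then show ?thesis using new_hole_setting.new_hole_shape e by simp
qed

theorem lemma4:
  fixes V :: "'a set" and Ed :: "'a set set" and K H :: "'a set" and e :: "'a set" and h :: nat
  assumes "simple_graph V Ed"
    and "graph_connected V Ed"
    and "card (holes V Ed) = h"
    and "\<forall>H1\<in>holes V Ed. \<forall>H2\<in>holes V Ed. H1 \<noteq> H2 \<longrightarrow>
           induced_edges Ed H1 \<inter> induced_edges Ed H2 = {}"
    and "maximal_clique V Ed K" and "card K \<ge> 3"
    and "\<forall>K'. maximal_clique V Ed K' \<and> card K' \<ge> 3 \<longrightarrow> K' = K"
    and "H \<in> holes V Ed" and "e \<in> induced_edges Ed H"
    and "card (holes V (Ed - {e})) \<ge> h"
  shows "e \<subseteq> K \<and>
    (\<forall>vi vj. e = {vi, vj} \<longrightarrow>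
      (\<forall>H' \<in> holes V (Ed - {e}) - holes V Ed. \<exists>vk\<in>K.
         induced_edges (Ed - {e}) H' = (induced_edges Ed H - {e}) \<union> {{vi, vk}, {vj, vk}}))"
proof -
  note shape = new_hole_replaces_edge[OF assms(1,4,5,7,8,9)]
  obtain vi vj where e: "e = {vi, vj}"
    using assms(1,9) unfolding simple_graph_def induced_edges_def by blast
  have "H \<notin> holes V (Ed - {e})" using hole_destroyed[OF assms(8,9)] e by blast
  moreover have "finite V" using assms(1) by (simp add: simple_graph_def)
  moreover have "card (holes V (Ed - {e})) \<ge> card (holes V Ed)" using assms(3,10) by simp
  ultimately obtain S where "S \<in> holes V (Ed - {e})" "S \<notin> holes V Ed"
    using new_hole_exists[OF _ assms(8)] by metis
  then have "e \<subseteq> K" using shape[OF e] e by blast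
  moreover have "\<exists>vk\<in>K. induced_edges (Ed - {e}) H' = (induced_edges Ed H - {e}) \<union> {{ui, vk}, {uj, vk}}"
    if "e = {ui, uj}" "H' \<in> holes V (Ed - {e}) - holes V Ed" for ui uj H'
    using shape[OF that(1)] that(2) by blast
  ultimately show ?thesis by blast
qed

end
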